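(* Let $m,n\ge1$, let $U\subseteq\mathbb{R}^{m\times n}$ be a non-empty open connected set and $\varphi:U\to U$ an injective continuous map. Then there is a dense $G_\delta$ subset $\Omega$ of $U$ with $\Omega\subseteq\mathscr{L}_{m,n}$ such that for every $A\in\Omega$ and every $k\ge1$, the iterate $\varphi^k(A)=\varphi\circ\cdots\circ\varphi(A)$ ($k$ times) lies in $\mathscr{L}_{m,n}\cap U$.
   Context: $\Vert\cdot\Vert$ is the supremum norm; a real $m\times n$ matrix $A$ is a Liouville matrix if $A\mathbf{q}-\mathbf{p}\neq\mathbf{0}$ for all nonzero $(\mathbf{q},\mathbf{p})\in\mathbb{Z}^n\times\mathbb{Z}^m$ and for every $N$ there exist $\mathbf{p}\in\mathbb{Z}^m$, $\mathbf{q}\in\mathbb{Z}^n\setminus\{\mathbf{0}\}$ with $\Vert A\mathbf{q}-\mathbf{p}\Vert<\Vert\mathbf{q}\Vert^{-N}$; $\mathscr{L}_{m,n}$ is the set of these. $\mathbb{R}^{m\times n}$ carries the topology of $\mathbb{R}^{mn}$. *)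

theory Defs
  imports "HOL-Analysis.Analysis"
begin

text \<open>Real m x n matrices are represented as real^'n^'m (rows indexed by 'm,
columns by 'n). Integer vectors are real vectors with integer entries.
The supremum norm is infnorm.\<close>

definition int_vec :: "real^'k \<Rightarrow> bool" where
  "int_vec v \<longleftrightarrow> (\<forall>i. v $ i \<in> \<int>)"

definition liouville_matrix :: "real^'n^'m \<Rightarrow> bool" where
  "liouville_matrix A \<longleftrightarrow>
     (\<forall>q p. int_vec q \<longrightarrow> int_vec p \<longrightarrow> (q, p) \<noteq> (0, 0) \<longrightarrow> A *v q - p \<noteq> 0) \<and>
     (\<forall>N::nat. \<exists>q p. int_vec q \<and> int_vec p \<and> q \<noteq> 0 \<and>
        infnorm (A *v q - p) < infnorm q powr (- real N))"

definition liouville_set :: "(real^'n^'m) set" where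
  "liouville_set = {A. liouville_matrix A}"

end

theory Submission
  imports Defs "HOL-Homology.Invariance_of_Domain"
begin

text \<open>The Liouville matrices are the intersection of countably many open dense sets:
for each integer pair \<open>(q, p)\<close> with \<open>q \<noteq> 0\<close> the matrices with \<open>A q \<noteq> p\<close>, and for each \<open>N\<close>
the matrices admitting an approximation of order \<open>N\<close>. Pulling each of these back along
every iterate \<open>\<phi>\<^sup>k\<close> gives sets that are open in \<open>U\<close> by continuity and dense in \<open>U\<close> because,
by invariance of domain, the injective continuous map \<open>\<phi>\<^sup>k\<close> sends non-empty open subsets
of \<open>U\<close> to non-empty open sets, which meet every dense set. Since \<open>U\<close> is completely
metrizable, the Baire category theorem makes the countable intersection of all these
pullbacks dense in \<open>U\<close>.\<close>

lemma Baire_open: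
  fixes U :: "'a::complete_space set"
  assumes "open U" and "countable \<G>"
    and "\<And>T. T \<in> \<G> \<Longrightarrow> openin (top_of_set U) T \<and> U \<subseteq> closure T"
  shows "U \<subseteq> closure (\<Inter>\<G>)"
proof -
  have "completely_metrizable_space (top_of_set U)"
    using \<open>open U\<close> by (simp add: completely_metrizable_space_openin completely_metrizable_space_euclidean)
  moreover have "top_of_set U closure_of T = U" if "T \<in> \<G>" for T
    using assms(3)[OF that] \<open>open U\<close> by (auto simp: closure_of_subtopology_open)
  ultimately have "top_of_set U closure_of \<Inter>\<G> = U"
    using Baire_category[of "top_of_set U" \<G>] assms(3) \<open>countable \<G>\<close> by auto
  then show ?thesis
    using \<open>open U\<close> by (auto simp: closure_of_subtopology_open)
qed

lemma closure_preimage_open_dense: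
  fixes f :: "'a \<Rightarrow> 'a::euclidean_space"
  assumes "open U" "continuous_on U f" "inj_on f U" "open D" "closure D = UNIV"
  shows "U \<subseteq> closure (U \<inter> f -` D)"
proof
  fix x assume "x \<in> U"
  show "x \<in> closure (U \<inter> f -` D)"
  proof (rule ccontr)
    assume "x \<notin> closure (U \<inter> f -` D)"
    define V where "V = U - closure (U \<inter> f -` D)"
    have "open V" "V \<subseteq> U" "x \<in> V"
      using \<open>open U\<close> \<open>x \<in> U\<close> \<open>x \<notin> closure _\<close> by (auto simp: V_def)
    then have "open (f ` V)"
      using assms(2,3) by (intro invariance_of_domain) (auto intro: continuous_on_subset inj_on_subset)
    moreover have "f ` V \<noteq> {}"
      using \<open>x \<in> V\<close> by blast
    ultimately have "f ` V \<inter> D \<noteq> {}"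
      using open_Int_closure_eq_empty[of "f ` V" D] \<open>closure D = UNIV\<close> by auto
    then obtain z where "z \<in> V" "f z \<in> D"
      by auto
    then show False
      using closure_subset[of "U \<inter> f -` D"] by (auto simp: V_def)
  qed
qed

lemma funpow_image_subset: "f ` S \<subseteq> S \<Longrightarrow> (f ^^ k) ` S \<subseteq> S"
  by (induction k) auto

lemma inj_on_funpow:
  assumes "f ` S \<subseteq> S" "inj_on f S"
  shows "inj_on (f ^^ k) S"
proof (induction k)
  case (Suc k)
  have "inj_on (f \<circ> (f ^^ k)) S"
    using Suc inj_on_subset[OF assms(2) funpow_image_subset[OF assms(1)]] by (rule comp_inj_on)
  then show ?case by (simp only: funpow.simps(2))
qed simp

lemma continuous_on_funpow:
  assumes "f ` S \<subseteq> S" "continuous_on S f"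
  shows "continuous_on S (f ^^ k)"
proof (induction k)
  case (Suc k)
  have "continuous_on S (f \<circ> (f ^^ k))"
    using Suc continuous_on_subset[OF assms(2) funpow_image_subset[OF assms(1)]]
    by (rule continuous_on_compose)
  then show ?case by (simp only: funpow.simps(2))
qed (simp add: continuous_on_id)

lemma dense_gdelta_with_orbits_in_Inter:
  fixes f :: "'a \<Rightarrow> 'a::euclidean_space"
  assumes "open U" "f ` U \<subseteq> U" "inj_on f U" "continuous_on U f"
    and "countable \<F>" and open_dense: "\<And>D. D \<in> \<F> \<Longrightarrow> open D \<and> closure D = UNIV"
  obtains \<Omega> where "gdelta_in (top_of_set U) \<Omega>" "U \<subseteq> closure \<Omega>" "\<Omega> \<subseteq> U"
    "\<And>k. (f ^^ k) ` \<Omega> \<subseteq> \<Inter>\<F>"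
proof
  define \<G> where "\<G> = insert U ((\<lambda>(k, D). U \<inter> (f ^^ k) -` D) ` (UNIV \<times> \<F>))"
  have "countable \<G>"
    using \<open>countable \<F>\<close> by (simp add: \<G>_def)
  have open_dense_in_U: "openin (top_of_set U) T \<and> U \<subseteq> closure T" if "T \<in> \<G>" for T
    using that unfolding \<G>_def
  proof (elim insertE imageE; clarsimp)
    fix k D assume "D \<in> \<F>"
    then show "openin (top_of_set U) (U \<inter> (f ^^ k) -` D) \<and> U \<subseteq> closure (U \<inter> (f ^^ k) -` D)"
      using open_dense[OF \<open>D \<in> \<F>\<close>] \<open>open U\<close>
        continuous_on_funpow[OF assms(2,4)] inj_on_funpow[OF assms(2,3)]
      by (simp add: continuous_openin_preimage_gen closure_preimage_open_dense)
  qed (use closure_subset in blast)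
  show "gdelta_in (top_of_set U) (\<Inter>\<G>)"
    using \<open>countable \<G>\<close> open_dense_in_U by (intro gdelta_in_Inter open_imp_gdelta_in) (auto simp: \<G>_def)
  show "U \<subseteq> closure (\<Inter>\<G>)"
    using \<open>countable \<G>\<close> open_dense_in_U \<open>open U\<close> by (intro Baire_open)
  show "\<Inter>\<G> \<subseteq> U"
    by (auto simp: \<G>_def)
  show "(f ^^ k) ` \<Inter>\<G> \<subseteq> \<Inter>\<F>" for k
    by (auto simp: \<G>_def)
qed

definition approximable_to_order :: "nat \<Rightarrow> (real^'n^'m) set" where
  "approximable_to_order N = {A. \<exists>q p. int_vec q \<and> int_vec p \<and> q \<noteq> 0 \<and>
     infnorm (A *v q - p) < infnorm q powr (- real N)}"

lemma countable_int_vec: "countable {q::real^'k. int_vec q}"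
proof -
  have "{q::real^'k. int_vec q} \<subseteq> range (\<lambda>z::'k \<Rightarrow> int. \<chi> i. of_int (z i))"
  proof
    fix q :: "real^'k" assume "q \<in> {q. int_vec q}"
    then have "\<forall>i. \<exists>z. q $ i = of_int z"
      by (auto simp: int_vec_def Ints_def)
    then obtain z where "\<forall>i. q $ i = of_int (z i)"
      by metis
    then show "q \<in> range (\<lambda>z::'k \<Rightarrow> int. \<chi> i. of_int (z i))"
      by (auto simp: vec_eq_iff)
  qed
  then show ?thesis
    by (rule countable_subset) simp
qed

lemma continuous_on_matrix_vector_mult_left: "continuous_on S (\<lambda>A::real^'n^'m. A *v q)"
  unfolding matrix_vector_mult_def by (intro continuous_intros)

lemma open_matrix_vector_neq: "open {A::real^'n^'m. A *v q \<noteq> p}"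
  by (intro open_Collect_neq continuous_intros continuous_on_matrix_vector_mult_left)

lemma dense_matrix_vector_neq:
  fixes q :: "real^'n" and p :: "real^'m"
  assumes "q \<noteq> 0"
  shows "closure {A::real^'n^'m. A *v q \<noteq> p} = UNIV"
proof -
  obtain j where "q $ j \<noteq> 0"
    using assms by (metis vec_eq_iff zero_index)
  define E :: "real^'n^'m" where "E = (\<chi> i k. if k = j then 1 else 0)"
  have "E *v q = (\<chi> i. q $ j)"
    by (simp add: E_def matrix_vector_mult_def vec_eq_iff if_distrib[of "\<lambda>x. x * _"] cong: if_cong)
  then have "E *v q \<noteq> 0"
    using \<open>q $ j \<noteq> 0\<close> by (simp add: vec_eq_iff)
  have "A \<in> closure {A. A *v q \<noteq> p}" for A :: "real^'n^'m"
  proof (cases "A *v q = p")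
    case True
    define B where "B n = A + inverse (real (Suc n)) *\<^sub>R E" for n
    have "B \<longlonglongrightarrow> A + 0 *\<^sub>R E"
      unfolding B_def by (intro tendsto_intros LIMSEQ_inverse_real_of_nat)
    then have "B \<longlonglongrightarrow> A"
      by simp
    moreover have "B n *v q \<noteq> p" for n
      using True \<open>E *v q \<noteq> 0\<close>
      by (simp add: B_def matrix_vector_mult_add_rdistrib scaleR_matrix_vector_assoc[symmetric])
    ultimately show ?thesis
      unfolding closure_sequential by blast
  qed (simp add: closure_subset[THEN subsetD])
  then show ?thesis by auto
qed

lemma open_approximable_to_order: "open (approximable_to_order N :: (real^'n^'m) set)"
proof -
  have "approximable_to_order N =
      (\<Union>q\<in>{q. int_vec q \<and> q \<noteq> 0}. \<Union>p\<in>{p. int_vec p}.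
         {A::real^'n^'m. infnorm (A *v q - p) < infnorm q powr (- real N)})"
    by (auto simp: approximable_to_order_def)
  moreover have "open {A::real^'n^'m. infnorm (A *v q - p) < c}" for q p c
    by (intro open_Collect_less continuous_intros continuous_on_matrix_vector_mult_left)
  ultimately show ?thesis
    by (simp add: open_UN)
qed

lemma matrix_vector_eq_int_imp_approximable:
  assumes "int_vec q" "int_vec p" "q \<noteq> 0" "A *v q = p"
  shows "A \<in> approximable_to_order N"
  unfolding approximable_to_order_def using assms
  by (intro CollectI exI[of _ q] exI[of _ p]) (simp add: infnorm_eq_0 infnorm_0)

lemma round_scaled_tendsto: "(\<lambda>M. of_int (round (real (Suc M) * c)) / real (Suc M)) \<longlonglongrightarrow> (c::real)"
proof -
  have "\<bar>of_int (round (x * c)) / x - c\<bar> \<le> inverse x" if "x > 0" for x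
  proof -
    have "\<bar>of_int (round (x * c)) / x - c\<bar> = \<bar>of_int (round (x * c)) - x * c\<bar> / x"
      using that by (simp add: field_simps)
    also have "\<dots> \<le> 1 / x"
      using of_int_round_abs_le[of "x * c"] that by (intro divide_right_mono) auto
    finally show ?thesis
      by (simp add: inverse_eq_divide)
  qed
  then have "(\<lambda>M. of_int (round (real (Suc M) * c)) / real (Suc M) - c) \<longlonglongrightarrow> 0"
    by (intro Lim_null_comparison[OF _ LIMSEQ_inverse_real_of_nat]) simp
  then show ?thesis
    by (rule LIM_zero_cancel)
qed

lemma dense_approximable_to_order: "closure (approximable_to_order N :: (real^'n^'m) set) = UNIV"
proof -
  have "A \<in> closure (approximable_to_order N)" for A :: "real^'n^'m"
  proof -
    fix j :: 'n
    \<comment> \<open>Rounding column \<open>j\<close> to the lattice \<open>\<int>/(M+1)\<close> makes \<open>A (M+1)e\<^sub>j\<close> an integer vector.\<close>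
    define B :: "nat \<Rightarrow> real^'n^'m" where
      "B M = (\<chi> i k. if k = j then of_int (round (real (Suc M) * A $ i $ k)) / real (Suc M) else A $ i $ k)"
      for M
    have "B M \<in> approximable_to_order N" for M
    proof (rule matrix_vector_eq_int_imp_approximable)
      let ?q = "\<chi> k. if k = j then real (Suc M) else 0"
      show "int_vec ?q" "?q \<noteq> 0"
        by (auto simp: int_vec_def vec_eq_iff)
      show "B M *v ?q = (\<chi> i. of_int (round (real (Suc M) * A $ i $ j)))"
        by (simp add: B_def matrix_vector_mult_def vec_eq_iff if_distrib cong: if_cong)
      show "int_vec (\<chi> i. of_int (round (real (Suc M) * A $ i $ j)) :: real^'m)"
        by (simp add: int_vec_def)
    qed
    moreover have "B \<longlonglongrightarrow> A"
    proof (intro vec_tendstoI)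
      fix i k
      show "(\<lambda>M. B M $ i $ k) \<longlonglongrightarrow> A $ i $ k"
        using round_scaled_tendsto[of "A $ i $ k"] by (cases "k = j") (simp_all add: B_def)
    qed
    ultimately show ?thesis
      unfolding closure_sequential by blast
  qed
  then show ?thesis by auto
qed

lemma liouville_set_eq:
  "liouville_set = (\<Inter>N. approximable_to_order N) \<inter>
     (\<Inter>(q, p)\<in>{q. int_vec q \<and> q \<noteq> 0} \<times> {p. int_vec p}. {A. A *v q \<noteq> p})"
  by (auto simp: liouville_set_def liouville_matrix_def approximable_to_order_def)

lemma liouville_set_countable_Inter_open_dense:
  obtains \<F> :: "(real^'n^'m) set set"
  where "countable \<F>" "\<And>D. D \<in> \<F> \<Longrightarrow> open D \<and> closure D = UNIV" "liouville_set = \<Inter>\<F>"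
proof
  let ?\<F> = "range approximable_to_order \<union>
    (\<lambda>(q, p). {A::real^'n^'m. A *v q \<noteq> p}) ` ({q. int_vec q \<and> q \<noteq> 0} \<times> {p. int_vec p})"
  have "countable {q::real^'n. int_vec q \<and> q \<noteq> 0}"
    by (rule countable_subset[OF _ countable_int_vec]) auto
  then show "countable ?\<F>"
    using countable_int_vec by auto
  show "open D \<and> closure D = UNIV" if "D \<in> ?\<F>" for D
    using that by (auto simp: open_approximable_to_order dense_approximable_to_order
        open_matrix_vector_neq dense_matrix_vector_neq)
  show "liouville_set = \<Inter>?\<F>"
    by (simp add: liouville_set_eq Inter_Un_distrib)
qed

theorem mainTheorem9:
  fixes U :: "(real^'n^'m) set" and \<phi> :: "real^'n^'m \<Rightarrow> real^'n^'m"
  assumes "U \<noteq> {}" and "open U" and "connected U"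
    and "\<phi> ` U \<subseteq> U" and "inj_on \<phi> U" and "continuous_on U \<phi>"
  shows "\<exists>\<Omega>. gdelta_in (top_of_set U) \<Omega> \<and> U \<subseteq> closure \<Omega> \<and>
           \<Omega> \<subseteq> liouville_set \<and>
           (\<forall>A\<in>\<Omega>. \<forall>k::nat. k \<ge> 1 \<longrightarrow> (\<phi> ^^ k) A \<in> liouville_set \<inter> U)"
proof -
  obtain \<F> :: "(real^'n^'m) set set" where "countable \<F>"
    and "\<And>D. D \<in> \<F> \<Longrightarrow> open D \<and> closure D = UNIV" and "liouville_set = \<Inter>\<F>"
    using liouville_set_countable_Inter_open_dense by blast
  then obtain \<Omega> where "gdelta_in (top_of_set U) \<Omega>" "U \<subseteq> closure \<Omega>" "\<Omega> \<subseteq> U"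
    and orbits: "\<And>k. (\<phi> ^^ k) ` \<Omega> \<subseteq> liouville_set"
    using dense_gdelta_with_orbits_in_Inter[OF \<open>open U\<close> assms(4-6)] by metis
  have "\<Omega> \<subseteq> liouville_set"
    using orbits[of 0] by simp
  moreover have "(\<phi> ^^ k) A \<in> liouville_set \<inter> U" if "A \<in> \<Omega>" for A k
    using that orbits[of k] \<open>\<Omega> \<subseteq> U\<close> funpow_image_subset[OF assms(4), of k] by blast
  ultimately show ?thesis
    using \<open>gdelta_in (top_of_set U) \<Omega>\<close> \<open>U \<subseteq> closure \<Omega>\<close> by blast
qed

end
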